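(* Let $H=(S_0,e_0,S_1,\dots)$ be a history sequence of the Simpler Lazy Set algorithm, let $S_i$ be a state of $H$, and let $a\neq b$ be active addresses of $S_i$ such that there is a path $Q$ from $a$ to $b$ in $S_i$ but there is no path from $a$ to $b$ in $S_{i+1}$. Let $b^-$ be the address on $Q$ preceding $b$ (so $\mathrm{Next}^{S_i}(b^-)=b$). Then (1) $b^-$ and $b$ are on the main branch of $S_i$, and (2) $(S_i,e_i,S_{i+1})$ is an $\mathrm{RM}$ step that removes $b$ from the main branch by setting $\mathrm{Next}^{S_{i+1}}(b^-)=\mathrm{Next}^{S_i}(b)$.
   Context: Simpler Lazy Set algorithm. Fix a countably infinite set $A$ of addresses with distinguished $\mathsf H,\mathsf T$; $\mathrm{Number}=\mathbb N\cup\{-1,\infty\}$. A state $S$: set $\mathrm{Active}^S\subseteq A$, $\mathrm{Next}^S:\mathrm{Active}^S\setminus\{\mathsf T\}\to A$, $\mathrm{Val}^S:\mathrm{Active}^S\to\mathrm{Number}$, and for each process $p$: $PC_p\in\{0,1,2,3.1,\dots,3.5\}$, $x_p\in\mathbb N$, $\mathrm{curr}_p\in A$, $\mathrm{status}_p$. $S$ is normal if $\mathrm{Active}^S$ is finite, $\mathsf H,\mathsf T$ are active with values $-1,\infty$, other active addresses have values in $\mathbb N$, and for active $a\neq\mathsf T$, $\mathrm{Next}(a)$ is active with $\mathrm{Val}(a)<\mathrm{Val}(\mathrm{Next}(a))$. A path is a sequence $a_1,\dots,a_m$ ($m>1$) of active addresses with $\mathrm{Next}(a_i)=a_{i+1}$;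 the main branch is the path from $\mathsf H$ to $\mathsf T$. Initial state: $\mathrm{Active}=\{\mathsf H,\mathsf T\}$, $\mathrm{Next}(\mathsf H)=\mathsf T$, all $PC_p=0$. Steps $(S,e,T)$ of a process $p$ on a normal $S$: (i) invocation: $PC_p$ from $0$ to $1$, $2$ or $3.1$, with $x_p\in\mathbb N$ arbitrary; (ii) failure: $PC_p$ from $1$ or $2$ to $0$ with $\chi(e)=f$, nothing else changes; (iii) $\mathrm{AD}(x)$ ($x=x_p$, $PC_p$ from $1$ to $0$): with $\mathfrak p$ the main-branch address having $\mathrm{Val}(\mathfrak p)<x\le\mathrm{Val}(\mathrm{Next}(\mathfrak p))$: if $\mathrm{Val}(\mathrm{Next}(\mathfrak p))=x$, no other change, $\chi(e)=1$; else a new address $a\notin\mathrm{Active}^S$ is made active with $\mathrm{Val}(a)=x$, $\mathrm{Next}^T(\mathfrak p)=a$, $\mathrm{Next}^T(a)=\mathrm{Next}^S(\mathfrak p)$, $\chi(e)=0$; (iv) $\mathrm{RM}(x)$ ($PC_p$ from $2$ to $0$): if the main branch has an address $cu$ of value $x$, with $pred$ its main-branch predecessor, set $\mathrm{Next}^T(pred)=\mathrm{Next}^S(cu)$, $\chi(e)=1$ ($e$ removes $cu$ from the main branch); else no change, $\chi(e)=0$; (v) CONTAINS$(x)$ lines, each an atomic step changing only $\mathrm{curr}_p,PC_p,\mathrm{status}_p$: 3.1 $\mathrm{curr}_p:=\mathsf H$; 3.2/3.3 $\mathrm{curr}_p:=\mathrm{Next}(\mathrm{curr}_p)$; 3.4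 if $\mathrm{Val}(\mathrm{curr}_p)\ge x$ go to 3.5 else to 3.3; 3.5 return $1$ if $\mathrm{Val}(\mathrm{curr}_p)=x$ else $0$, $PC_p:=0$. A history sequence is $(S_0,e_0,S_1,\dots)$ with $S_0$ the initial state and each $(S_i,e_i,S_{i+1})$ a step of some process. *)

theory Defs
  imports Main "HOL-Library.Countable"
begin

datatype number = NegOne | Fin nat | Infty

fun num_less :: "number \<Rightarrow> number \<Rightarrow> bool" where
  "num_less NegOne y = (y \<noteq> NegOne)"
| "num_less (Fin m) NegOne = False"
| "num_less (Fin m) (Fin n) = (m < n)"
| "num_less (Fin m) Infty = True"
| "num_less Infty y = False"

definition num_le :: "number \<Rightarrow> number \<Rightarrow> bool" where
  "num_le x y \<longleftrightarrow> x = y \<or> num_less x y"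

datatype pcv = L0 | L1 | L2 | L31 | L32 | L33 | L34 | L35

text \<open>A state. Next and Val are total functions whose values matter only on
  Active - {T} resp. Active.\<close>
record ('a, 'p) state =
  active :: "'a set"
  nxt    :: "'a \<Rightarrow> 'a"
  val    :: "'a \<Rightarrow> number"
  pc     :: "'p \<Rightarrow> pcv"
  xp     :: "'p \<Rightarrow> nat"
  curr   :: "'p \<Rightarrow> 'a"
  status :: "'p \<Rightarrow> nat"

datatype ekind = KInv | KFail | KAD | KRM | KCont
datatype chi = ChiNone | ChiF | Chi0 | Chi1
datatype 'p event = Event (ev_proc: 'p) (ev_kind: ekind) (ev_chi: chi)

definition normal :: "'a \<Rightarrow> 'a \<Rightarrow> ('a,'p) state \<Rightarrow> bool" where
  "normal H T S \<longleftrightarrow>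
     finite (active S) \<and> H \<in> active S \<and> T \<in> active S \<and>
     val S H = NegOne \<and> val S T = Infty \<and>
     (\<forall>a\<in>active S - {H, T}. \<exists>n. val S a = Fin n) \<and>
     (\<forall>a\<in>active S - {T}. nxt S a \<in> active S \<and> num_less (val S a) (val S (nxt S a)))"

definition is_path :: "'a \<Rightarrow> ('a,'p) state \<Rightarrow> 'a list \<Rightarrow> bool" where
  "is_path T S xs \<longleftrightarrow> length xs > 1 \<and> set xs \<subseteq> active S \<and>
     (\<forall>k < length xs - 1. xs ! k \<noteq> T \<and> nxt S (xs ! k) = xs ! Suc k)"

definition main_branch :: "'a \<Rightarrow> 'a \<Rightarrow> ('a,'p) state \<Rightarrow> 'a list \<Rightarrow> bool" where
  "main_branch H T S xs \<longleftrightarrow> is_path T S xs \<and> hd xs = H \<and> last xs = T"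

definition on_main :: "'a \<Rightarrow> 'a \<Rightarrow> ('a,'p) state \<Rightarrow> 'a \<Rightarrow> bool" where
  "on_main H T S a \<longleftrightarrow> (\<exists>xs. main_branch H T S xs \<and> a \<in> set xs)"

definition main_pred :: "'a \<Rightarrow> 'a \<Rightarrow> ('a,'p) state \<Rightarrow> 'a \<Rightarrow> 'a \<Rightarrow> bool" where
  "main_pred H T S pred cu \<longleftrightarrow>
     (\<exists>xs k. main_branch H T S xs \<and> Suc k < length xs \<and> xs ! k = pred \<and> xs ! Suc k = cu)"

definition mem_same :: "'a \<Rightarrow> ('a,'p) state \<Rightarrow> ('a,'p) state \<Rightarrow> bool" where
  "mem_same T S S' \<longleftrightarrow> active S' = active S \<and>
     (\<forall>a\<in>active S - {T}. nxt S' a = nxt S a) \<and> (\<forall>a\<in>active S. val S' a = val S a)"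

definition others_same :: "'p \<Rightarrow> ('a,'p) state \<Rightarrow> ('a,'p) state \<Rightarrow> bool" where
  "others_same p S S' \<longleftrightarrow> (\<forall>q. q \<noteq> p \<longrightarrow>
     pc S' q = pc S q \<and> xp S' q = xp S q \<and> curr S' q = curr S q \<and> status S' q = status S q)"

definition invoc_step :: "'a \<Rightarrow> 'p \<Rightarrow> ('a,'p) state \<Rightarrow> ('a,'p) state \<Rightarrow> bool" where
  "invoc_step T p S S' \<longleftrightarrow> pc S p = L0 \<and> pc S' p \<in> {L1, L2, L31} \<and>
     mem_same T S S' \<and> others_same p S S' \<and> curr S' p = curr S p \<and> status S' p = status S p"

definition fail_step :: "'a \<Rightarrow> 'p \<Rightarrow> ('a,'p) state \<Rightarrow> ('a,'p) state \<Rightarrow> bool" where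
  "fail_step T p S S' \<longleftrightarrow> pc S p \<in> {L1, L2} \<and> pc S' p = L0 \<and>
     mem_same T S S' \<and> others_same p S S' \<and>
     xp S' p = xp S p \<and> curr S' p = curr S p \<and> status S' p = status S p"

definition p_done :: "'p \<Rightarrow> ('a,'p) state \<Rightarrow> ('a,'p) state \<Rightarrow> bool" where
  "p_done p S S' \<longleftrightarrow> pc S' p = L0 \<and> xp S' p = xp S p \<and> curr S' p = curr S p \<and>
     status S' p = status S p \<and> others_same p S S'"

definition ad_step :: "'a \<Rightarrow> 'a \<Rightarrow> 'p \<Rightarrow> ('a,'p) state \<Rightarrow> chi \<Rightarrow> ('a,'p) state \<Rightarrow> bool" where
  "ad_step H T p S c S' \<longleftrightarrow> pc S p = L1 \<and> p_done p S S' \<and>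
     (\<exists>pp. on_main H T S pp \<and> pp \<noteq> T \<and>
        num_less (val S pp) (Fin (xp S p)) \<and> num_le (Fin (xp S p)) (val S (nxt S pp)) \<and>
        (if val S (nxt S pp) = Fin (xp S p) then c = Chi1 \<and> mem_same T S S'
         else c = Chi0 \<and> (\<exists>a. a \<notin> active S \<and>
            active S' = insert a (active S) \<and> val S' a = Fin (xp S p) \<and>
            nxt S' pp = a \<and> nxt S' a = nxt S pp \<and>
            (\<forall>b\<in>active S - {T, pp}. nxt S' b = nxt S b) \<and>
            (\<forall>b\<in>active S. val S' b = val S b))))"

definition rm_removes :: "'a \<Rightarrow> 'a \<Rightarrow> 'p \<Rightarrow> ('a,'p) state \<Rightarrow> ('a,'p) state \<Rightarrow> 'a \<Rightarrow> 'a \<Rightarrow> bool" where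
  "rm_removes H T p S S' cu pred \<longleftrightarrow> pc S p = L2 \<and> p_done p S S' \<and>
     on_main H T S cu \<and> val S cu = Fin (xp S p) \<and> main_pred H T S pred cu \<and>
     active S' = active S \<and> nxt S' pred = nxt S cu \<and>
     (\<forall>b\<in>active S - {T, pred}. nxt S' b = nxt S b) \<and>
     (\<forall>b\<in>active S. val S' b = val S b)"

definition rm_step :: "'a \<Rightarrow> 'a \<Rightarrow> 'p \<Rightarrow> ('a,'p) state \<Rightarrow> chi \<Rightarrow> ('a,'p) state \<Rightarrow> bool" where
  "rm_step H T p S c S' \<longleftrightarrow>
     (c = Chi1 \<and> (\<exists>cu pred. rm_removes H T p S S' cu pred)) \<or>
     (c = Chi0 \<and> pc S p = L2 \<and> p_done p S S' \<and> mem_same T S S' \<and>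
        \<not> (\<exists>cu. on_main H T S cu \<and> val S cu = Fin (xp S p)))"

text \<open>CONTAINS(x) lines 3.1 - 3.5; only curr_p, PC_p, status_p may change.
  Reading: lines 3.2 and 3.3 continue with the test at line 3.4.\<close>
definition cont_step :: "'a \<Rightarrow> 'a \<Rightarrow> 'p \<Rightarrow> ('a,'p) state \<Rightarrow> chi \<Rightarrow> ('a,'p) state \<Rightarrow> bool" where
  "cont_step H T p S c S' \<longleftrightarrow> mem_same T S S' \<and> others_same p S S' \<and> xp S' p = xp S p \<and>
    (  (pc S p = L31 \<and> curr S' p = H \<and> pc S' p = L32 \<and> status S' p = status S p \<and> c = ChiNone)
     \<or> (pc S p \<in> {L32, L33} \<and> curr S' p = nxt S (curr S p) \<and> pc S' p = L34
          \<and> status S' p = status S p \<and> c = ChiNone)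
     \<or> (pc S p = L34 \<and> curr S' p = curr S p \<and> status S' p = status S p \<and> c = ChiNone \<and>
          pc S' p = (if num_le (Fin (xp S p)) (val S (curr S p)) then L35 else L33))
     \<or> (pc S p = L35 \<and> curr S' p = curr S p \<and> pc S' p = L0 \<and>
          (if val S (curr S p) = Fin (xp S p) then status S' p = 1 \<and> c = Chi1
           else status S' p = 0 \<and> c = Chi0)))"

definition step :: "'a \<Rightarrow> 'a \<Rightarrow> ('a,'p) state \<Rightarrow> 'p event \<Rightarrow> ('a,'p) state \<Rightarrow> bool" where
  "step H T S e S' \<longleftrightarrow> normal H T S \<and>
    (case e of Event p k c \<Rightarrow>
       (k = KInv \<and> c = ChiNone \<and> invoc_step T p S S')
     \<or> (k = KFail \<and> c = ChiF \<and> fail_step T p S S')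
     \<or> (k = KAD \<and> ad_step H T p S c S')
     \<or> (k = KRM \<and> rm_step H T p S c S')
     \<or> (k = KCont \<and> cont_step H T p S c S'))"

definition initial :: "'a \<Rightarrow> 'a \<Rightarrow> ('a,'p) state \<Rightarrow> bool" where
  "initial H T S \<longleftrightarrow> active S = {H, T} \<and> nxt S H = T \<and>
     val S H = NegOne \<and> val S T = Infty \<and> (\<forall>p. pc S p = L0)"

definition history_prefix :: "'a \<Rightarrow> 'a \<Rightarrow> (nat \<Rightarrow> ('a,'p) state) \<Rightarrow> (nat \<Rightarrow> 'p event) \<Rightarrow> nat \<Rightarrow> bool" where
  "history_prefix H T S e n \<longleftrightarrow> initial H T (S 0) \<and> (\<forall>j<n. step H T (S j) (e j) (S (Suc j)))"

end

theory Submission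
  imports Defs
begin

text \<open>Paths are the chains of the successor relation \<open>x \<rightarrow> Next(x)\<close>, so a step disconnects
  two addresses only if it destroys an edge that cannot be bypassed. Steps leaving the memory
  unchanged destroy nothing, and an AD step replaces the edge \<open>pp \<rightarrow> Next(pp)\<close> by a two-edge
  detour through the new address. An RM step redirects \<open>pred \<rightarrow> b\<close> to the unique successor of
  \<open>b\<close>, which keeps every address other than \<open>b\<close> reachable; so the disconnected target is \<open>b\<close>.
  Values increase strictly along edges, so the penultimate address of the path is not \<open>b\<close> and
  stays reachable from \<open>a\<close>; were it different from \<open>pred\<close>, its edge to \<open>b\<close> would survive and
  reconnect \<open>a\<close> to \<open>b\<close>.\<close>

definition next_rel :: "'a \<Rightarrow> ('a, 'p) state \<Rightarrow> ('a \<times> 'a) set" where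
  "next_rel T S = {(x, y). x \<in> active S - {T} \<and> y \<in> active S \<and> nxt S x = y}"

lemma is_path_iff_nth_next_rel:
  "is_path T S Q \<longleftrightarrow> 1 < length Q \<and> (\<forall>k < length Q - 1. (Q ! k, Q ! Suc k) \<in> next_rel T S)"
proof
  assume "is_path T S Q"
  then show "1 < length Q \<and> (\<forall>k < length Q - 1. (Q ! k, Q ! Suc k) \<in> next_rel T S)"
    unfolding is_path_def next_rel_def by (auto dest!: nth_mem)
next
  assume Q: "1 < length Q \<and> (\<forall>k < length Q - 1. (Q ! k, Q ! Suc k) \<in> next_rel T S)"
  have "Q ! j \<in> active S" if "j < length Q" for j
  proof (cases "j < length Q - 1")
    case True
    then show ?thesis using Q by (auto simp: next_rel_def)
  next
    case False
    then have "j = Suc (length Q - 2)" using that Q by auto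
    moreover have "(Q ! (length Q - 2), Q ! Suc (length Q - 2)) \<in> next_rel T S" using Q by auto
    ultimately show ?thesis by (simp add: next_rel_def)
  qed
  then show "is_path T S Q"
    using Q unfolding is_path_def next_rel_def by (auto simp: in_set_conv_nth)
qed

lemma path_exists_iff_trancl:
  "(\<exists>Q. is_path T S Q \<and> hd Q = x \<and> last Q = y) \<longleftrightarrow> (x, y) \<in> (next_rel T S)\<^sup>+"
proof
  assume "\<exists>Q. is_path T S Q \<and> hd Q = x \<and> last Q = y"
  then obtain Q where Q: "is_path T S Q" "hd Q = x" "last Q = y" by blast
  then have "1 < length Q" "Q \<noteq> []" by (auto simp: is_path_iff_nth_next_rel)
  have "(x, y) \<in> next_rel T S ^^ (length Q - 1)"
    unfolding relpow_fun_conv using Q \<open>1 < length Q\<close> \<open>Q \<noteq> []\<close>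
    by (intro exI[of _ "nth Q"]) (auto simp: is_path_iff_nth_next_rel hd_conv_nth last_conv_nth)
  with \<open>1 < length Q\<close> show "(x, y) \<in> (next_rel T S)\<^sup>+"
    unfolding trancl_power by (intro exI[of _ "length Q - 1"]) simp
next
  assume "(x, y) \<in> (next_rel T S)\<^sup>+"
  then obtain n f where "0 < n" "f 0 = x" "f n = y" "\<forall>i < n. (f i, f (Suc i)) \<in> next_rel T S"
    by (auto simp: trancl_power relpow_fun_conv)
  then show "\<exists>Q. is_path T S Q \<and> hd Q = x \<and> last Q = y"
    by (intro exI[of _ "map f [0..<Suc n]"])
      (auto simp: is_path_iff_nth_next_rel hd_map last_map simp del: upt_Suc)
qed

lemma path_penultimate:
  assumes "is_path T S Q"
  shows "(hd Q, Q ! (length Q - 2)) \<in> (next_rel T S)\<^sup>*"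
    and "(Q ! (length Q - 2), last Q) \<in> next_rel T S"
proof -
  have Q: "1 < length Q" "\<forall>k < length Q - 1. (Q ! k, Q ! Suc k) \<in> next_rel T S"
    using assms by (simp_all add: is_path_iff_nth_next_rel)
  define n where "n = length Q - 2"
  have len: "length Q = Suc (Suc n)" using Q(1) by (simp add: n_def)
  then have "Q \<noteq> []" by auto
  have "(hd Q, Q ! n) \<in> next_rel T S ^^ n"
    unfolding relpow_fun_conv using Q(2) len \<open>Q \<noteq> []\<close>
    by (intro exI[of _ "nth Q"]) (simp add: hd_conv_nth)
  then show "(hd Q, Q ! (length Q - 2)) \<in> (next_rel T S)\<^sup>*"
    unfolding n_def by (rule relpow_imp_rtrancl)
  have "last Q = Q ! Suc n" using len \<open>Q \<noteq> []\<close> by (simp add: last_conv_nth)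
  with Q(2) len show "(Q ! (length Q - 2), last Q) \<in> next_rel T S"
    unfolding n_def by simp
qed

lemma trancl_bypass:
  assumes "R - {(p, c)} \<subseteq> R'" and "(p, d) \<in> R'" and "\<forall>z. (c, z) \<in> R \<longrightarrow> z = d"
    and "p \<noteq> c" and "(x, y) \<in> R\<^sup>+"
  shows "(x, y) \<in> R'\<^sup>+ \<or> (y = c \<and> (x, d) \<in> R'\<^sup>+)"
  using assms(5)
proof (induction rule: trancl_induct)
  case (base y)
  then show ?case using assms(1,2) by (cases "(x, y) = (p, c)") auto
next
  case (step y z)
  show ?case
  proof (cases "(y, z) = (p, c)")
    case True
    with step.IH assms(4) have "(x, p) \<in> R'\<^sup>+" by simp
    then have "(x, d) \<in> R'\<^sup>+" using assms(2) by (rule trancl_into_trancl)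
    with True show ?thesis by simp
  next
    case False
    with step.hyps(2) assms(1) have "(y, z) \<in> R'" by auto
    moreover from step.hyps(2) assms(3) have "y = c \<Longrightarrow> z = d" by simp
    ultimately show ?thesis using step.IH by (blast intro: trancl_into_trancl)
  qed
qed

lemma trancl_bypass_last_edge:
  assumes "R - {(p, c)} \<subseteq> R'" and "(p, d) \<in> R'" and "\<forall>z. (c, z) \<in> R \<longrightarrow> z = d"
    and "p \<noteq> c" and "(c, c) \<notin> R"
    and "(x, w) \<in> R\<^sup>*" and "(w, y) \<in> R" and "(x, y) \<notin> R'\<^sup>+"
  shows "y = c \<and> w = p"
proof -
  note bypass = trancl_bypass[OF assms(1-4)]
  have "(x, y) \<in> R\<^sup>+" using assms(6,7) by (rule rtrancl_into_trancl1)
  with bypass assms(8) have "y = c" by blast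
  with assms(5,7) have "w \<noteq> c" by auto
  have "(x, w) \<in> R'\<^sup>*"
  proof (cases "x = w")
    case False
    with assms(6) have "(x, w) \<in> R\<^sup>+" by (simp add: rtrancl_eq_or_trancl)
    with bypass \<open>w \<noteq> c\<close> have "(x, w) \<in> R'\<^sup>+" by blast
    then show ?thesis by (rule trancl_into_rtrancl)
  qed simp
  have "w = p"
  proof (rule ccontr)
    assume "w \<noteq> p"
    with assms(1,7) have "(w, y) \<in> R'" by auto
    with \<open>(x, w) \<in> R'\<^sup>*\<close> have "(x, y) \<in> R'\<^sup>+" by (rule rtrancl_into_trancl1)
    with assms(8) show False ..
  qed
  with \<open>y = c\<close> show ?thesis ..
qed

lemma num_less_irrefl: "\<not> num_less v v"
  by (cases v) auto

lemma normal_next_rel_irrefl: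
  assumes "normal H T S"
  shows "(x, x) \<notin> next_rel T S"
proof
  assume "(x, x) \<in> next_rel T S"
  then have "x \<in> active S - {T}" "nxt S x = x" by (auto simp: next_rel_def)
  with assms have "num_less (val S x) (val S (nxt S x))" unfolding normal_def by blast
  with \<open>nxt S x = x\<close> num_less_irrefl show False by simp
qed

lemma on_main_active: "on_main H T S x \<Longrightarrow> x \<in> active S"
  unfolding on_main_def main_branch_def is_path_def by auto

lemma main_pred_next_rel:
  "main_pred H T S pred cu \<Longrightarrow> on_main H T S pred \<and> (pred, cu) \<in> next_rel T S"
  unfolding main_pred_def on_main_def main_branch_def is_path_iff_nth_next_rel
  by (auto dest: Suc_lessD nth_mem)

lemma mem_same_next_rel: "mem_same T S S' \<Longrightarrow> next_rel T S \<subseteq> next_rel T S'"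
  unfolding mem_same_def next_rel_def by auto

lemma ad_step_cases:
  assumes "ad_step H T p S c S'"
  obtains "mem_same T S S'"
    | pp a where "on_main H T S pp" "pp \<noteq> T" "a \<notin> active S" "active S' = insert a (active S)"
        "nxt S' pp = a" "nxt S' a = nxt S pp" "\<forall>b\<in>active S - {T, pp}. nxt S' b = nxt S b"
  using assms unfolding ad_step_def by (elim conjE exE) (split if_split_asm; blast)

lemma ad_step_next_rel:
  assumes normal: "normal H T S" and ad: "ad_step H T p S c S'"
  shows "next_rel T S \<subseteq> (next_rel T S')\<^sup>+"
  using ad
proof (cases rule: ad_step_cases)
  case 1
  then show ?thesis using mem_same_next_rel[OF 1] trancl_incr by blast
next
  case (2 pp a)
  note pp = 2(1,2) and a = 2(3-7)
  have "pp \<in> active S" using pp(1) by (rule on_main_active)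
  then have "T \<in> active S" "nxt S pp \<in> active S"
    using normal pp(2) unfolding normal_def by auto
  with \<open>pp \<in> active S\<close> have "(pp, a) \<in> next_rel T S'" "(a, nxt S pp) \<in> next_rel T S'"
    using a pp(2) unfolding next_rel_def by auto
  then have detour: "(pp, nxt S pp) \<in> (next_rel T S')\<^sup>+" by auto
  have "(x, y) \<in> (next_rel T S')\<^sup>+" if "(x, y) \<in> next_rel T S" for x y
  proof (cases "x = pp")
    case True
    with that detour show ?thesis by (simp add: next_rel_def)
  next
    case False
    with that a show ?thesis by (auto simp: next_rel_def)
  qed
  then show ?thesis by auto
qed

lemma rm_removes_disconnect_last_edge:
  assumes normal: "normal H T S" and rm: "rm_removes H T p S S' cu pred"
    and "(x, w) \<in> (next_rel T S)\<^sup>*" and "(w, y) \<in> next_rel T S"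
    and "(x, y) \<notin> (next_rel T S')\<^sup>+"
  shows "y = cu \<and> w = pred"
proof (rule trancl_bypass_last_edge[OF _ _ _ _ _ assms(3-5)])
  have pred_cu: "(pred, cu) \<in> next_rel T S"
    using rm main_pred_next_rel[of H T S pred cu] unfolding rm_removes_def by blast
  with rm show "next_rel T S - {(pred, cu)} \<subseteq> next_rel T S'"
    unfolding rm_removes_def next_rel_def by auto
  have "cu \<in> active S" "cu \<noteq> T"
    using rm normal on_main_active unfolding rm_removes_def normal_def by auto
  then have "nxt S cu \<in> active S" using normal unfolding normal_def by blast
  with pred_cu rm show "(pred, nxt S cu) \<in> next_rel T S'"
    unfolding rm_removes_def next_rel_def by auto
  show "\<forall>z. (cu, z) \<in> next_rel T S \<longrightarrow> z = nxt S cu" by (simp add: next_rel_def)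
  show "pred \<noteq> cu" "(cu, cu) \<notin> next_rel T S"
    using pred_cu normal_next_rel_irrefl[OF normal] by auto
qed

lemma step_next_rel_cases:
  assumes "step H T S e S'"
  shows "next_rel T S \<subseteq> (next_rel T S')\<^sup>+ \<or>
    (\<exists>p cu pred. e = Event p KRM Chi1 \<and> rm_removes H T p S S' cu pred)"
proof -
  obtain p k c where e: "e = Event p k c" by (cases e)
  have normal: "normal H T S" using assms unfolding step_def by simp
  have "mem_same T S S' \<or> ad_step H T p S c S' \<or>
      (k = KRM \<and> c = Chi1 \<and> (\<exists>cu pred. rm_removes H T p S S' cu pred))"
    using assms unfolding e step_def invoc_step_def fail_step_def cont_step_def rm_step_def
    by (elim conjE disjE) (simp_all, blast+)
  moreover have "next_rel T S \<subseteq> (next_rel T S')\<^sup>+" if "mem_same T S S'"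
    using mem_same_next_rel[OF that] trancl_incr by blast
  ultimately show ?thesis
    using ad_step_next_rel[OF normal] e by blast
qed

theorem lemma4p10:
  fixes H T :: "'a::countable" and S :: "nat \<Rightarrow> ('a, 'p) state" and e :: "nat \<Rightarrow> 'p event"
    and i :: nat and a b :: 'a and Q :: "'a list"
  assumes "infinite (UNIV :: 'a set)" and "H \<noteq> T"
    and "history_prefix H T S e (Suc i)"
    and "a \<in> active (S i)" and "b \<in> active (S i)" and "a \<noteq> b"
    and "is_path T (S i) Q" and "hd Q = a" and "last Q = b"
    and "\<not> (\<exists>Q'. is_path T (S (Suc i)) Q' \<and> hd Q' = a \<and> last Q' = b)"
  shows "on_main H T (S i) (Q ! (length Q - 2)) \<and> on_main H T (S i) b \<and>
         (\<exists>p. e i = Event p KRM Chi1 \<and>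
              rm_removes H T p (S i) (S (Suc i)) b (Q ! (length Q - 2)) \<and>
              nxt (S (Suc i)) (Q ! (length Q - 2)) = nxt (S i) b)"
proof -
  let ?R = "next_rel T (S i)" and ?R' = "next_rel T (S (Suc i))" and ?w = "Q ! (length Q - 2)"
  have step: "step H T (S i) (e i) (S (Suc i))"
    using assms(3) unfolding history_prefix_def by simp
  then have normal: "normal H T (S i)" unfolding step_def by simp
  have a_w: "(a, ?w) \<in> ?R\<^sup>*" and w_b: "(?w, b) \<in> ?R"
    using path_penultimate[OF assms(7)] assms(8,9) by simp_all
  have broken: "(a, b) \<notin> ?R'\<^sup>+"
    using assms(10) path_exists_iff_trancl[of T "S (Suc i)" a b] by simp
  have "(a, b) \<in> ?R\<^sup>+" using a_w w_b by (rule rtrancl_into_trancl1)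
  with broken have "\<not> ?R \<subseteq> ?R'\<^sup>+"
    using trancl_mono_subset[of ?R "?R'\<^sup>+"] trancl_id[OF trans_trancl] by blast
  with step_next_rel_cases[OF step] obtain p cu pred
    where e: "e i = Event p KRM Chi1" and rm: "rm_removes H T p (S i) (S (Suc i)) cu pred"
    by blast
  from rm_removes_disconnect_last_edge[OF normal rm a_w w_b broken]
  have "b = cu" "?w = pred" by simp_all
  moreover have "on_main H T (S i) pred" "on_main H T (S i) cu"
    using rm main_pred_next_rel[of H T "S i" pred cu] unfolding rm_removes_def by blast+
  moreover have "nxt (S (Suc i)) pred = nxt (S i) cu"
    using rm unfolding rm_removes_def by blast
  ultimately show ?thesis using e rm by blast
qed

end
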